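(* For every integer $k\ge 2$, the set of maximal simplices of $\mathrm{VR}(T_{3k,3k};k)$ equals $M_{3k,k}\cup N_{3k,k}$, where \[N_{3k,k}=\big\{\{([a],[b]),([a+k],[b]),([a+2k],[b])\},\ \{([a],[b]),([a],[b+k]),([a],[b+2k])\} : 0\le a,b\le 3k-1\big\}.\] For every integer $k\ge 3$, the set of maximal simplices of $\mathrm{VR}(T_{3k-1,3k-1};k)$ equals $M_{3k-1,k}\cup N_{3k-1,k}$, where \[N_{3k-1,k}=\big\{\{([a],[b]),([a+k],[b]),([a+2k-1],[b]),([a+2k],[b])\},\ \{([a],[b]),([a],[b+k]),([a],[b+2k-1]),([a],[b+2k])\} : 0\le a,b\le 3k-2\big\}.\]
   Context: $\mathbb{Z}^2$ carries the $l^1$ metric. $T_{n,n}=\mathbb{Z}^2/(n\mathbb{Z}\times n\mathbb{Z})$ with quotient map $\pi_n$ and quotient metric $d([x],[y])=\min\{d(x',y'):\pi_n(x')=[x],\pi_n(y')=[y]\}$ (equivalently $\{0,\dots,n-1\}^2$ with the $l^1$ product of cyclic metrics); its points are written $([a],[b])$ with $[a]$ the residue of $a$ mod $n$. $\mathrm{VR}(X;r)$ is the simplicial complex on $X$ whose simplices are the finite nonempty subsets of diameter at most $r$; a maximal simplex is one not properly contained in another. $M_{n,k}=\{\pi_n(\sigma):\sigma \text{ a maximal simplex of } \mathrm{VR}(\mathbb{Z}^2;k)\}$. *)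

theory Defs
  imports Main
begin

definition zdist :: "int \<times> int \<Rightarrow> int \<times> int \<Rightarrow> int" where
  "zdist p q = \<bar>fst p - fst q\<bar> + \<bar>snd p - snd q\<bar>"

(* T_{n,n} represented by {0..n-1}^2; the quotient map pi_n *)
definition torus :: "int \<Rightarrow> (int \<times> int) set" where
  "torus n = {0..<n} \<times> {0..<n}"

definition proj :: "int \<Rightarrow> int \<times> int \<Rightarrow> int \<times> int" where
  "proj n p = (fst p mod n, snd p mod n)"

(* cyclic metric on Z/nZ and its l^1 product (= quotient metric on T_{n,n}) *)
definition cdist :: "int \<Rightarrow> int \<Rightarrow> int \<Rightarrow> int" where
  "cdist n x y = min ((x - y) mod n) ((y - x) mod n)"

definition tdist :: "int \<Rightarrow> int \<times> int \<Rightarrow> int \<times> int \<Rightarrow> int" where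
  "tdist n p q = cdist n (fst p) (fst q) + cdist n (snd p) (snd q)"

definition VR :: "'a set \<Rightarrow> ('a \<Rightarrow> 'a \<Rightarrow> int) \<Rightarrow> int \<Rightarrow> 'a set set" where
  "VR X d r = {S. S \<subseteq> X \<and> finite S \<and> S \<noteq> {} \<and> (\<forall>x\<in>S. \<forall>y\<in>S. d x y \<le> r)}"

definition maximal_simplices :: "'a set set \<Rightarrow> 'a set set" where
  "maximal_simplices K = {S \<in> K. \<forall>T\<in>K. S \<subseteq> T \<longrightarrow> T = S}"

definition Mset :: "int \<Rightarrow> int \<Rightarrow> (int \<times> int) set set" where
  "Mset n k = (\<lambda>\<sigma>. proj n ` \<sigma>) ` maximal_simplices (VR UNIV zdist k)"

definition N3 :: "int \<Rightarrow> (int \<times> int) set set" where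
  "N3 k = (let n = 3 * k in
     {{proj n (a, b), proj n (a + k, b), proj n (a + 2 * k, b)} | a b. 0 \<le> a \<and> a \<le> n - 1 \<and> 0 \<le> b \<and> b \<le> n - 1}
   \<union> {{proj n (a, b), proj n (a, b + k), proj n (a, b + 2 * k)} | a b. 0 \<le> a \<and> a \<le> n - 1 \<and> 0 \<le> b \<and> b \<le> n - 1})"

definition N3m1 :: "int \<Rightarrow> (int \<times> int) set set" where
  "N3m1 k = (let n = 3 * k - 1 in
     {{proj n (a, b), proj n (a + k, b), proj n (a + 2 * k - 1, b), proj n (a + 2 * k, b)} | a b. 0 \<le> a \<and> a \<le> n - 1 \<and> 0 \<le> b \<and> b \<le> n - 1}
   \<union> {{proj n (a, b), proj n (a, b + k), proj n (a, b + 2 * k - 1), proj n (a, b + 2 * k)} | a b. 0 \<le> a \<and> a \<le> n - 1 \<and> 0 \<le> b \<and> b \<le> n - 1})"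

end

theory Submission
  imports Defs
begin

(* In the rotated coordinates u = x + y, v = x - y the l^1 metric of Z^2 becomes the l^infinity
   metric, so the maximal simplices of VR(Z^2; k) are the lattice squares
   [u0, u0 + k] x [v0, v0 + k], the diamonds.  For 2k + 2 <= n and 3k < 2n a projected diamond is
   still maximal in the torus: a point adjacent to all of it has a single lift adjacent to the
   whole diamond.
   Conversely, lift the points of a maximal simplex S of the torus next to one of them.  If the
   lifts form a clique, S is a projected diamond.  Otherwise two lifts are far apart although their
   projections are close; for n = 3k and n = 3k - 1 this forces them onto a common row or column,
   where they wrap around the torus and make S contain three points a, a + k, a + 2k of that line.
   Such a triple extends in only one way, by a - k or by a + 3k, to a simplex, which gives the
   sets N. *)

section \<open>Maximal simplices of Vietoris-Rips complexes\<close>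

lemma maximal_simplicesI:
  "S \<in> K \<Longrightarrow> (\<And>T. T \<in> K \<Longrightarrow> S \<subseteq> T \<Longrightarrow> T \<subseteq> S) \<Longrightarrow> S \<in> maximal_simplices K"
  unfolding maximal_simplices_def by blast

lemma maximal_simplicesD:
  "S \<in> maximal_simplices K \<Longrightarrow> S \<in> K"
  "S \<in> maximal_simplices K \<Longrightarrow> T \<in> K \<Longrightarrow> S \<subseteq> T \<Longrightarrow> T = S"
  unfolding maximal_simplices_def by blast+

lemma VR_dist_le: "S \<in> VR X d r \<Longrightarrow> x \<in> S \<Longrightarrow> y \<in> S \<Longrightarrow> d x y \<le> r"
  unfolding VR_def by blast

lemma VR_subset: "S \<in> VR X d r \<Longrightarrow> S \<subseteq> X"
  unfolding VR_def by blast

lemma maximal_simplex_absorbs: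
  assumes S: "S \<in> maximal_simplices (VR X d r)" and "x \<in> X" "d x x \<le> r"
    and "\<And>y. y \<in> S \<Longrightarrow> d x y \<le> r \<and> d y x \<le> r"
  shows "x \<in> S"
proof -
  have "S \<in> VR X d r" using maximal_simplicesD(1)[OF S] .
  then have "insert x S \<in> VR X d r" using assms(2-4) unfolding VR_def by auto
  then show ?thesis using maximal_simplicesD(2)[OF S] by blast
qed

lemma maximal_simplices_VR_image:
  assumes "\<And>x. x \<in> X \<Longrightarrow> h x \<in> X" "\<And>x. h (h x) = x" "\<And>x y. d (h x) (h y) = d x y"
    and S: "S \<in> maximal_simplices (VR X d r)"
  shows "h ` S \<in> maximal_simplices (VR X d r)"
proof -
  have image_VR: "h ` T \<in> VR X d r" if "T \<in> VR X d r" for T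
    using that assms(1,3) unfolding VR_def by auto
  have hh: "h ` h ` A = A" for A using assms(2) by (simp add: image_image)
  show ?thesis
  proof (rule maximal_simplicesI)
    show "h ` S \<in> VR X d r" by (rule image_VR[OF maximal_simplicesD(1)[OF S]])
    fix T assume "T \<in> VR X d r" "h ` S \<subseteq> T"
    then have "h ` T \<in> VR X d r" "S \<subseteq> h ` T" using image_VR hh image_mono by metis+
    then have "h ` T = S" using maximal_simplicesD(2)[OF S] by blast
    then show "T \<subseteq> h ` S" using hh[of T] by simp
  qed
qed

section \<open>The cyclic distance\<close>

lemma cdist_cong:
  "x mod n = x' mod n \<Longrightarrow> y mod n = y' mod n \<Longrightarrow> cdist n x y = cdist n x' y'"
  unfolding cdist_def by (simp add: mod_diff_cong[of x n x' y y'] mod_diff_cong[of y n y' x x'])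

lemma cdist_commute: "cdist n x y = cdist n y x"
  unfolding cdist_def by simp

lemma cdist_add_right: "cdist n (x + c) (y + c) = cdist n x y"
  unfolding cdist_def by simp

lemma cdist_self: "cdist n x x = 0"
  unfolding cdist_def by simp

lemma cdist_nonneg: "0 < n \<Longrightarrow> 0 \<le> cdist n x y"
  unfolding cdist_def by simp

lemma cdist_eq_min_mod:
  assumes "0 < n"
  shows "cdist n x y = min ((x - y) mod n) (n - (x - y) mod n)"
proof -
  have "(y - x) mod n = (if (x - y) mod n = 0 then 0 else n - (x - y) mod n)"
    using zmod_zminus1_eq_if[of "x - y" n] by simp
  then show ?thesis
    using assms by (simp add: cdist_def)
qed

lemma cdist_le_abs:
  assumes "0 < n"
  shows "cdist n x y \<le> \<bar>x - y\<bar>"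
proof (cases "y \<le> x")
  case True
  then have "(x - y) mod n \<le> x - y" by (intro zmod_le_nonneg_dividend) simp
  with True show ?thesis by (simp add: cdist_def min.coboundedI1)
next
  case False
  then have "(y - x) mod n \<le> y - x" by (intro zmod_le_nonneg_dividend) simp
  with False show ?thesis by (simp add: cdist_def min.coboundedI2)
qed

lemma cdist_le_abs_add_mult:
  assumes "0 < n"
  shows "cdist n x y \<le> \<bar>x - y + c * n\<bar>"
proof -
  have "cdist n x y = cdist n (x + c * n) y" by (rule cdist_cong) simp_all
  also have "\<dots> \<le> \<bar>x - y + c * n\<bar>" using cdist_le_abs[OF assms] by (simp add: algebra_simps)
  finally show ?thesis .
qed

lemma cdist_eq_min_abs:
  assumes "0 < n" "\<bar>x - y\<bar> \<le> n"
  shows "cdist n x y = min \<bar>x - y\<bar> (n - \<bar>x - y\<bar>)"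
proof -
  consider "x - y = n \<or> x - y = - n" | "0 \<le> x - y" "x - y < n" | "- n < x - y" "x - y < 0"
    using assms by linarith
  then show ?thesis
  proof cases
    case 1
    then show ?thesis using assms by (auto simp: cdist_eq_min_mod)
  next
    case 2
    then show ?thesis using assms by (simp add: cdist_eq_min_mod min_def)
  next
    case 3
    have "(x - y) mod n = (x - y + n) mod n" by simp
    also have "\<dots> = x - y + n" using 3 by (intro mod_pos_pos_trivial) auto
    finally have "(x - y) mod n = x - y + n" .
    then show ?thesis using assms 3 by (simp add: cdist_eq_min_mod min_def)
  qed
qed

lemma cdist_shift:
  assumes "0 < n" "0 \<le> c" "c \<le> n"
  shows "cdist n x (z + c) = min \<bar>(x - z) mod n - c\<bar> (n - \<bar>(x - z) mod n - c\<bar>)"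
proof -
  have "cdist n x (z + c) = cdist n ((x - z) mod n + z) (c + z)"
    by (rule cdist_cong) (simp_all add: mod_add_right_eq add.commute)
  also have "\<dots> = min \<bar>(x - z) mod n - c\<bar> (n - \<bar>(x - z) mod n - c\<bar>)"
    using assms pos_mod_bound[OF assms(1), of "x - z"] pos_mod_sign[OF assms(1), of "x - z"]
    by (simp add: cdist_add_right cdist_eq_min_abs)
  finally show ?thesis .
qed

lemma cdist_eq_0_iff:
  assumes "0 < n"
  shows "cdist n x y = 0 \<longleftrightarrow> x mod n = y mod n"
proof -
  define r where "r = (x - y) mod n"
  have "0 \<le> r" "r < n" using assms by (simp_all add: r_def)
  then have "cdist n x y = 0 \<longleftrightarrow> r = 0"
    unfolding cdist_eq_min_mod[OF assms] r_def[symmetric] by (simp add: min_def)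
  then show ?thesis by (simp add: r_def mod_eq_dvd_iff dvd_eq_mod_eq_0)
qed

lemma cdist_attained:
  assumes "0 < n"
  shows "\<exists>x'. x' mod n = x mod n \<and> \<bar>x' - y\<bar> = cdist n x y"
proof -
  define r where "r = (x - y) mod n"
  have r: "0 \<le> r" "r < n" using assms by (simp_all add: r_def)
  have x: "(y + r) mod n = x mod n" by (simp add: r_def mod_add_right_eq)
  have "(y + r - n) mod n = (y + r) mod n" by (simp add: mod_eq_dvd_iff)
  with x have x': "(y + r - n) mod n = x mod n" by simp
  have c: "cdist n x y = min r (n - r)" by (simp add: cdist_eq_min_mod[OF assms] r_def)
  show ?thesis
  proof (cases "r \<le> n - r")
    case True
    then show ?thesis using r x c by (intro exI[of _ "y + r"]) simp
  next
    case False
    then show ?thesis using r x' c by (intro exI[of _ "y + r - n"]) simp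
  qed
qed

lemma min_add_le_disj: "min a b + e \<le> (k::int) \<Longrightarrow> a + e \<le> k \<or> b + e \<le> k"
  by linarith

section \<open>Diamonds in the integer plane\<close>

lemma zdist_commute: "zdist p q = zdist q p"
  unfolding zdist_def by (simp add: abs_minus_commute)

lemma zdist_self: "zdist p p = 0"
  unfolding zdist_def by simp

definition diag_u :: "int \<times> int \<Rightarrow> int" where "diag_u p = fst p + snd p"

definition diag_v :: "int \<times> int \<Rightarrow> int" where "diag_v p = fst p - snd p"

definition diamond :: "int \<Rightarrow> int \<Rightarrow> int \<Rightarrow> (int \<times> int) set" where
  "diamond u0 v0 k =
     {p. u0 \<le> diag_u p \<and> diag_u p \<le> u0 + k \<and> v0 \<le> diag_v p \<and> diag_v p \<le> v0 + k}"

lemma zdist_eq_max_diag: "zdist p q = max \<bar>diag_u p - diag_u q\<bar> \<bar>diag_v p - diag_v q\<bar>"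
  unfolding zdist_def diag_u_def diag_v_def by arith

lemma zdist_le_iff_diag:
  "zdist p q \<le> k \<longleftrightarrow> \<bar>diag_u p - diag_u q\<bar> \<le> k \<and> \<bar>diag_v p - diag_v q\<bar> \<le> k"
  by (simp add: zdist_eq_max_diag)

lemma diamond_point:
  assumes "even (u - v)" "u0 \<le> u" "u \<le> u0 + k" "v0 \<le> v" "v \<le> v0 + k"
  shows "\<exists>p \<in> diamond u0 v0 k. diag_u p = u \<and> diag_v p = v"
proof -
  define p where "p = ((u + v) div 2, (u - v) div 2)"
  have "diag_u p = u" "diag_v p = v"
    using assms(1) unfolding p_def diag_u_def diag_v_def by (auto elim!: evenE) presburger+
  then show ?thesis using assms(2-5) unfolding diamond_def by (intro bexI[of _ p]) auto
qed

lemma exists_near_same_parity: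
  fixes lo hi u v :: int
  assumes "lo < hi" "lo \<le> v" "v \<le> hi"
  obtains w where "lo \<le> w" "w \<le> hi" "\<bar>w - v\<bar> \<le> 1" "even (u - w)"
proof (cases "even (u - v)")
  case True
  then show ?thesis using that[of v] assms by simp
next
  case False
  then have "even (u - (v + 1))" "even (u - (v - 1))" by presburger+
  show ?thesis
  proof (cases "v < hi")
    case True
    then show ?thesis using that[of "v + 1"] assms \<open>even (u - (v + 1))\<close> by simp
  next
    case False
    then show ?thesis using that[of "v - 1"] assms \<open>even (u - (v - 1))\<close> by simp
  qed
qed

lemma diamond_point_u:
  assumes "1 \<le> k" "u0 \<le> u" "u \<le> u0 + k" "v0 \<le> v" "v \<le> v0 + k"
  shows "\<exists>p \<in> diamond u0 v0 k. diag_u p = u \<and> \<bar>diag_v p - v\<bar> \<le> 1"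
proof -
  obtain w where "v0 \<le> w" "w \<le> v0 + k" "\<bar>w - v\<bar> \<le> 1" "even (u - w)"
    using exists_near_same_parity[of v0 "v0 + k" v] assms by auto
  then show ?thesis using diamond_point[of u w u0 k v0] assms by force
qed

lemma diamond_point_v:
  assumes "1 \<le> k" "u0 \<le> u" "u \<le> u0 + k" "v0 \<le> v" "v \<le> v0 + k"
  shows "\<exists>p \<in> diamond u0 v0 k. \<bar>diag_u p - u\<bar> \<le> 1 \<and> diag_v p = v"
proof -
  obtain w where "u0 \<le> w" "w \<le> u0 + k" "\<bar>w - u\<bar> \<le> 1" "even (v - w)"
    using exists_near_same_parity[of u0 "u0 + k" u] assms by auto
  moreover from this have "even (w - v)" by presburger
  ultimately show ?thesis using diamond_point[of w v u0 k v0] assms by force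
qed

lemma finite_diamond: "finite (diamond u0 v0 k)"
proof (rule finite_subset)
  let ?M = "\<bar>u0\<bar> + \<bar>v0\<bar> + \<bar>k\<bar>"
  show "diamond u0 v0 k \<subseteq> {-?M..?M} \<times> {-?M..?M}"
    unfolding diamond_def diag_u_def diag_v_def by auto
qed simp

lemma diamond_in_VR: "1 \<le> k \<Longrightarrow> diamond u0 v0 k \<in> VR UNIV zdist k"
  using diamond_point_u[of k u0 u0 v0 v0] finite_diamond
  unfolding VR_def zdist_eq_max_diag by (auto simp: diamond_def)

lemma diamond_maximal:
  assumes k: "1 \<le> k"
  shows "diamond u0 v0 k \<in> maximal_simplices (VR UNIV zdist k)"
proof (rule maximal_simplicesI[OF diamond_in_VR[OF k]])
  fix T assume T: "T \<in> VR UNIV zdist k" "diamond u0 v0 k \<subseteq> T"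
  have "0 \<le> k" using k by simp
  then obtain p1 p2 p3 p4 where
    "p1 \<in> diamond u0 v0 k" "diag_u p1 = u0" "p2 \<in> diamond u0 v0 k" "diag_u p2 = u0 + k"
    "p3 \<in> diamond u0 v0 k" "diag_v p3 = v0" "p4 \<in> diamond u0 v0 k" "diag_v p4 = v0 + k"
    using diamond_point_u[OF k, of u0 u0 v0 v0] diamond_point_u[OF k, of u0 "u0 + k" v0 v0]
      diamond_point_v[OF k, of u0 u0 v0 v0] diamond_point_v[OF k, of u0 u0 v0 "v0 + k"]
    by (simp only: order.refl le_add_same_cancel1) blast
  show "T \<subseteq> diamond u0 v0 k"
  proof
    fix t assume "t \<in> T"
    have "p1 \<in> T" "p2 \<in> T" "p3 \<in> T" "p4 \<in> T"
      using T(2) \<open>p1 \<in> _\<close> \<open>p2 \<in> _\<close> \<open>p3 \<in> _\<close> \<open>p4 \<in> _\<close> by auto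
    then have "zdist t p1 \<le> k" "zdist t p2 \<le> k" "zdist t p3 \<le> k" "zdist t p4 \<le> k"
      using VR_dist_le[OF T(1) \<open>t \<in> T\<close>] by auto
    then have "\<bar>diag_u t - u0\<bar> \<le> k" "\<bar>diag_u t - (u0 + k)\<bar> \<le> k"
      "\<bar>diag_v t - v0\<bar> \<le> k" "\<bar>diag_v t - (v0 + k)\<bar> \<le> k"
      unfolding zdist_le_iff_diag
      using \<open>diag_u p1 = u0\<close> \<open>diag_u p2 = u0 + k\<close> \<open>diag_v p3 = v0\<close> \<open>diag_v p4 = v0 + k\<close>
      by metis+
    then show "t \<in> diamond u0 v0 k" unfolding diamond_def by (simp add: abs_le_iff)
  qed
qed

lemma VR_subset_diamond:
  assumes S: "S \<in> VR UNIV zdist k"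
  shows "S \<subseteq> diamond (Min (diag_u ` S)) (Min (diag_v ` S)) k"
proof
  fix s assume s: "s \<in> S"
  have fin: "finite S" "S \<noteq> {}" using S unfolding VR_def by auto
  have "Min (diag_u ` S) \<in> diag_u ` S" "Min (diag_v ` S) \<in> diag_v ` S"
    using fin by simp_all
  then obtain a b where a: "a \<in> S" "diag_u a = Min (diag_u ` S)"
    and b: "b \<in> S" "diag_v b = Min (diag_v ` S)"
    by (metis imageE)
  have "diag_u a \<le> diag_u s" "diag_v b \<le> diag_v s" using a b s fin by simp_all
  moreover have "zdist s a \<le> k" "zdist s b \<le> k" using VR_dist_le[OF S] s a b by auto
  ultimately show "s \<in> diamond (Min (diag_u ` S)) (Min (diag_v ` S)) k"
    using a b unfolding diamond_def zdist_le_iff_diag by auto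
qed

lemma maximal_simplices_VR_int_plane:
  assumes "1 \<le> k"
  shows "maximal_simplices (VR UNIV zdist k) = {diamond u0 v0 k | u0 v0. True}"
proof -
  have "\<exists>u0 v0. S = diamond u0 v0 k" if S: "S \<in> maximal_simplices (VR UNIV zdist k)" for S
    using maximal_simplicesD[OF S] VR_subset_diamond diamond_in_VR[OF assms] by blast
  then show ?thesis using diamond_maximal[OF assms] by blast
qed

section \<open>Projecting to the torus\<close>

lemma proj_in_torus: "0 < n \<Longrightarrow> proj n p \<in> torus n"
  unfolding proj_def torus_def by auto

lemma proj_eq_self: "p \<in> torus n \<Longrightarrow> proj n p = p"
  unfolding proj_def torus_def by (cases p) auto

lemma proj_eq_iff: "proj n p = proj n q \<longleftrightarrow> fst p mod n = fst q mod n \<and> snd p mod n = snd q mod n"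
  unfolding proj_def by simp

lemma proj_row_eqI: "n dvd x - x' \<Longrightarrow> proj n (x, y) = proj n (x', y)"
  by (simp add: proj_eq_iff mod_eq_dvd_iff)

lemma proj_swap: "proj n (prod.swap p) = prod.swap (proj n p)"
  unfolding proj_def by simp

lemma swap_in_torus: "p \<in> torus n \<Longrightarrow> prod.swap p \<in> torus n"
  unfolding torus_def by auto

lemma tdist_swap: "tdist n (prod.swap p) (prod.swap q) = tdist n p q"
  unfolding tdist_def by simp

lemma maximal_simplices_swap:
  "S \<in> maximal_simplices (VR (torus n) (tdist n) k) \<Longrightarrow>
    prod.swap ` S \<in> maximal_simplices (VR (torus n) (tdist n) k)"
  by (rule maximal_simplices_VR_image) (auto simp: swap_in_torus tdist_swap)
lemma tdist_proj:
  "tdist n (proj n p) (proj n q) = cdist n (fst p) (fst q) + cdist n (snd p) (snd q)"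
proof -
  have "cdist n (fst p mod n) (fst q mod n) = cdist n (fst p) (fst q)"
    "cdist n (snd p mod n) (snd q mod n) = cdist n (snd p) (snd q)"
    by (rule cdist_cong; simp)+
  then show ?thesis unfolding tdist_def proj_def by simp
qed

lemma tdist_proj_le_zdist: "0 < n \<Longrightarrow> tdist n (proj n p) (proj n q) \<le> zdist p q"
  unfolding tdist_proj zdist_def by (intro add_mono cdist_le_abs)

lemma exists_close_lift:
  assumes "0 < n"
  shows "\<exists>P. proj n P = proj n p \<and> zdist P c = tdist n (proj n p) (proj n c)"
proof -
  obtain x where "x mod n = fst p mod n" "\<bar>x - fst c\<bar> = cdist n (fst p) (fst c)"
    using cdist_attained[OF assms] by blast
  moreover obtain y where "y mod n = snd p mod n" "\<bar>y - snd c\<bar> = cdist n (snd p) (snd c)"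
    using cdist_attained[OF assms] by blast
  ultimately show ?thesis
    by (intro exI[of _ "(x, y)"]) (simp add: proj_eq_iff zdist_def tdist_proj)
qed

lemma proj_VR:
  assumes "0 < n" "C \<in> VR UNIV zdist k"
  shows "proj n ` C \<in> VR (torus n) (tdist n) k"
proof -
  have "tdist n (proj n x) (proj n y) \<le> k" if "x \<in> C" "y \<in> C" for x y
    using tdist_proj_le_zdist[OF assms(1), of x y] VR_dist_le[OF assms(2) that] by simp
  then show ?thesis using assms proj_in_torus unfolding VR_def by auto
qed

lemma close_lifts_eq:
  assumes n: "0 < n" "3 * k < 2 * n"
    and P: "proj n P = proj n P'" "zdist P c \<le> k" "zdist P' e \<le> k"
    and ce: "zdist c e \<le> k"
    and gap: "\<bar>diag_u c - diag_u e\<bar> < n - 2 * k \<or> \<bar>diag_v c - diag_v e\<bar> < n - 2 * k"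
  shows "P = P'"
proof -
  obtain i j where ij: "fst P - fst P' = n * i" "snd P - snd P' = n * j"
    using P(1) unfolding proj_eq_iff mod_eq_dvd_iff by (auto elim!: dvdE)
  have u: "diag_u P - diag_u P' = n * (i + j)" and v: "diag_v P - diag_v P' = n * (i - j)"
    using ij unfolding diag_u_def diag_v_def by (simp_all add: algebra_simps)
  have close: "\<bar>diag_u P - diag_u c\<bar> \<le> k" "\<bar>diag_v P - diag_v c\<bar> \<le> k"
    "\<bar>diag_u P' - diag_u e\<bar> \<le> k" "\<bar>diag_v P' - diag_v e\<bar> \<le> k"
    "\<bar>diag_u c - diag_u e\<bar> \<le> k" "\<bar>diag_v c - diag_v e\<bar> \<le> k"
    using P(2,3) ce unfolding zdist_le_iff_diag by auto
  have small: "\<bar>m\<bar> < b" if "\<bar>n * m\<bar> < b * n" for m b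
    using that n(1) by (simp add: abs_mult mult.commute[of n])
  have "\<bar>n * (i + j)\<bar> < 2 * n" using close(1,3,5) n(2) unfolding u[symmetric] by linarith
  moreover have "\<bar>n * (i - j)\<bar> < 2 * n" using close(2,4,6) n(2) unfolding v[symmetric] by linarith
  ultimately have "\<bar>i + j\<bar> < 2" "\<bar>i - j\<bar> < 2" using small by blast+
  \<comment> \<open>one of them even vanishes, and i + j, i - j have the same parity\<close>
  moreover have "\<bar>n * (i + j)\<bar> < 1 * n \<or> \<bar>n * (i - j)\<bar> < 1 * n"
  proof (cases "\<bar>diag_u c - diag_u e\<bar> < n - 2 * k")
    case True
    then show ?thesis using close(1,3) unfolding u[symmetric] by linarith
  next
    case False
    then show ?thesis using gap close(2,4) unfolding v[symmetric] by linarith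
  qed
  then have "\<bar>i + j\<bar> < 1 \<or> \<bar>i - j\<bar> < 1" using small by blast
  ultimately have "i = 0" "j = 0" by presburger+
  then show ?thesis using ij by (simp add: prod_eq_iff)
qed

lemma proj_diamond_maximal:
  assumes k: "1 \<le> k" and n: "2 * k + 2 \<le> n" "3 * k < 2 * n"
  shows "proj n ` diamond u0 v0 k \<in> maximal_simplices (VR (torus n) (tdist n) k)"
proof (rule maximal_simplicesI)
  let ?D = "diamond u0 v0 k"
  have n0: "0 < n" using k n by simp
  show "proj n ` ?D \<in> VR (torus n) (tdist n) k" by (rule proj_VR[OF n0 diamond_in_VR[OF k]])
  fix T assume T: "T \<in> VR (torus n) (tdist n) k" "proj n ` ?D \<subseteq> T"
  show "T \<subseteq> proj n ` ?D"
  proof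
    fix p assume p: "p \<in> T"
    have "p \<in> torus n" using VR_subset[OF T(1)] p by blast
    then have p_proj: "proj n p = p" by (rule proj_eq_self)
    have lift: "\<exists>P. proj n P = p \<and> zdist P c \<le> k" if "c \<in> ?D" for c
    proof -
      have "proj n c \<in> T" using T(2) that by blast
      then have "tdist n p (proj n c) \<le> k" by (rule VR_dist_le[OF T(1) p])
      then show ?thesis using exists_close_lift[OF n0, of p c] p_proj by metis
    qed
    obtain c0 where c0: "c0 \<in> ?D" using diamond_point_u[OF k, of u0 u0 v0 v0] k by auto
    then obtain P where P: "proj n P = p" "zdist P c0 \<le> k" using lift by blast
    \<comment> \<open>The lift near c0 is also the lift near any c: pass through a point m with the
      u-coordinate of c0 and almost the v-coordinate of c.\<close>
    have "zdist P c \<le> k" if c: "c \<in> ?D" for c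
    proof -
      have "u0 \<le> diag_u c0" "diag_u c0 \<le> u0 + k" "v0 \<le> diag_v c" "diag_v c \<le> v0 + k"
        using c c0 unfolding diamond_def by auto
      then obtain m where m: "m \<in> ?D" "diag_u m = diag_u c0" "\<bar>diag_v m - diag_v c\<bar> \<le> 1"
        using diamond_point_u[OF k] by blast
      obtain Pm Pc where Pm: "proj n Pm = p" "zdist Pm m \<le> k"
        and Pc: "proj n Pc = p" "zdist Pc c \<le> k"
        using lift m(1) c by blast
      have D: "zdist c0 m \<le> k" "zdist m c \<le> k"
        using VR_dist_le[OF diamond_in_VR[OF k]] c0 m(1) c by auto
      have "P = Pm"
        using close_lifts_eq[OF n0 n(2) _ P(2) Pm(2) D(1)] P(1) Pm(1) m(2) n by simp
      also have "Pm = Pc"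
        using close_lifts_eq[OF n0 n(2) _ Pm(2) Pc(2) D(2)] Pm(1) Pc(1) m(3) n by simp
      finally show ?thesis using Pc(2) by simp
    qed
    then have "P \<in> ?D"
      using k by (intro maximal_simplex_absorbs[OF diamond_maximal[OF k]])
        (auto simp: zdist_commute zdist_self)
    then show "p \<in> proj n ` ?D" using P(1) by blast
  qed
qed

lemma maximal_simplex_in_Mset:
  assumes "0 < n" "1 \<le> k" and S: "S \<in> maximal_simplices (VR (torus n) (tdist n) k)"
    and C: "C \<in> VR UNIV zdist k" "S \<subseteq> proj n ` C"
  shows "S \<in> Mset n k"
proof -
  define D where "D = diamond (Min (diag_u ` C)) (Min (diag_v ` C)) k"
  have "S \<subseteq> proj n ` D" using C VR_subset_diamond[OF C(1)] unfolding D_def by blast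
  moreover have "proj n ` D \<in> VR (torus n) (tdist n) k"
    unfolding D_def using proj_VR[OF assms(1) diamond_in_VR[OF assms(2)]] .
  ultimately have "proj n ` D = S" using maximal_simplicesD(2)[OF S] by blast
  moreover have "D \<in> maximal_simplices (VR UNIV zdist k)"
    unfolding D_def by (rule diamond_maximal[OF assms(2)])
  ultimately show ?thesis unfolding Mset_def by blast
qed

section \<open>Simplices along a row or a column\<close>

(* The points a + i k, i = -1..2, of row b.  For n = 3k the ends a - k and a + 2k coincide,
   giving the triangles of N3; for n = 3k - 1 the point a - k is a + 2k - 1, giving the
   quadruples of N3m1. *)
definition row_simplex :: "int \<Rightarrow> int \<Rightarrow> int \<Rightarrow> int \<Rightarrow> (int \<times> int) set" where
  "row_simplex n k a b = (\<lambda>i. proj n (a + i * k, b)) ` {-1..2}"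

lemma row_simplex_eq:
  "row_simplex n k a b =
    {proj n (a - k, b), proj n (a, b), proj n (a + k, b), proj n (a + 2 * k, b)}"
proof -
  have "{-1..2::int} = {-1, 0, 1, 2}" by auto
  then show ?thesis unfolding row_simplex_def by simp
qed

definition line_simplices :: "int \<Rightarrow> int \<Rightarrow> (int \<times> int) set set" where
  "line_simplices n k =
     {row_simplex n k a b | a b. True} \<union> {prod.swap ` row_simplex n k a b | a b. True}"

lemma swap_image_line_simplices:
  assumes "L \<in> line_simplices n k"
  shows "prod.swap ` L \<in> line_simplices n k"
proof -
  have "prod.swap ` prod.swap ` A = A" for A :: "(int \<times> int) set" by (simp add: image_image)
  then show ?thesis using assms unfolding line_simplices_def by blast
qed

locale torus_near_3k =
  fixes n k :: int
  assumes size: "(n = 3 * k \<and> 2 \<le> k) \<or> (n = 3 * k - 1 \<and> 3 \<le> k)"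
begin

lemma n_pos: "0 < n" and k_ge_2: "2 \<le> k" and n_ge: "3 * k - 1 \<le> n"
  and n_large: "2 * k + 2 \<le> n" "3 * k < 2 * n"
  using size by auto

(* s is the position of a point on the cycle relative to the first point of a row triple,
   e its distance from the row. *)
lemma cyclic_offsets_near_triple:
  assumes s: "0 \<le> s" "s < n" and e: "0 \<le> e"
    and c0: "min s (n - s) + e \<le> k" and c1: "min \<bar>s - k\<bar> (n - \<bar>s - k\<bar>) + e \<le> k"
    and c2: "min \<bar>s - 2 * k\<bar> (n - \<bar>s - 2 * k\<bar>) + e \<le> k"
  shows "e = 0 \<and> (s = 0 \<or> s = k \<or> s = 2 * k \<or> s = n - k \<or> s = 3 * k - n)"
proof -
  note d0 = min_add_le_disj[OF c0] and d1 = min_add_le_disj[OF c1] and d2 = min_add_le_disj[OF c2]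
  consider "s \<le> k" | "k < s" "s \<le> 2 * k" | "2 * k < s" by linarith
  then show ?thesis
  proof cases
    case 1
    then have "\<bar>s - k\<bar> = k - s" "\<bar>s - 2 * k\<bar> = 2 * k - s" using size by auto
    then show ?thesis using 1 d1 d2 size s e by (elim disjE) auto
  next
    case 2
    then have "\<bar>s - k\<bar> = s - k" "\<bar>s - 2 * k\<bar> = 2 * k - s" by auto
    then show ?thesis using 2 d0 d1 size s e by (elim disjE) auto
  next
    case 3
    then have "\<bar>s - k\<bar> = s - k" using size by auto
    then show ?thesis using 3 d1 size s e by (elim disjE) auto
  qed
qed

lemma close_to_row_triple:
  assumes T: "T \<in> VR (torus n) (tdist n) k" "t \<in> T"
    and z: "proj n (z, y) \<in> T" "proj n (z + k, y) \<in> T" "proj n (z + 2 * k, y) \<in> T"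
  shows "t \<in> row_simplex n k z y \<or> t = proj n (z + 3 * k, y)"
proof -
  obtain x y' where t: "t = (x, y')" by (cases t)
  have "t \<in> torus n" using VR_subset[OF T(1)] T(2) by blast
  then have t_proj: "t = proj n t" by (rule proj_eq_self[symmetric])
  define s where "s = (x - z) mod n"
  define e where "e = cdist n y' y"
  have s: "0 \<le> s" "s < n" using n_pos by (simp_all add: s_def)
  have "0 \<le> e" unfolding e_def by (rule cdist_nonneg[OF n_pos])
  have close: "min \<bar>s - c\<bar> (n - \<bar>s - c\<bar>) + e \<le> k"
    if "proj n (z + c, y) \<in> T" "0 \<le> c" "c \<le> n" for c
  proof -
    have "tdist n (proj n t) (proj n (z + c, y)) \<le> k"
      using VR_dist_le[OF T(1) T(2) that(1)] t_proj by simp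
    then show ?thesis
      using cdist_shift[OF n_pos that(2,3)] unfolding tdist_proj t e_def s_def by simp
  qed
  have "min s (n - s) + e \<le> k" using close[of 0] z(1) n_pos s by simp
  moreover have "min \<bar>s - k\<bar> (n - \<bar>s - k\<bar>) + e \<le> k" using close[of k] z(2) k_ge_2 n_ge by simp
  moreover have "min \<bar>s - 2 * k\<bar> (n - \<bar>s - 2 * k\<bar>) + e \<le> k"
    using close[of "2 * k"] z(3) k_ge_2 n_ge by simp
  ultimately have "e = 0" and off: "s = 0 \<or> s = k \<or> s = 2 * k \<or> s = n - k \<or> s = 3 * k - n"
    using cyclic_offsets_near_triple[OF s \<open>0 \<le> e\<close>] by blast+
  have "x mod n = (z + s) mod n" by (simp add: s_def mod_add_right_eq)
  moreover have "y' mod n = y mod n" using \<open>e = 0\<close> cdist_eq_0_iff[OF n_pos] unfolding e_def by blast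
  ultimately have "proj n (x, y') = proj n (z + s, y)" by (simp add: proj_eq_iff)
  then have "t = proj n (z + s, y)" using t_proj unfolding t by simp
  moreover have "proj n (z + (n - k), y) = proj n (z - k, y)"
    "proj n (z + (3 * k - n), y) = proj n (z + 3 * k, y)"
    by (simp_all add: proj_row_eqI)
  ultimately show ?thesis using off unfolding row_simplex_eq by fastforce
qed

lemma cdist_multiple_le:
  assumes "\<bar>j\<bar> \<le> 3"
  shows "cdist n (j * k) 0 \<le> k"
proof -
  have "cdist n (j * k) 0 \<le> \<bar>j * k + c * n\<bar>" for c
    using cdist_le_abs_add_mult[OF n_pos, of "j * k" 0 c] by simp
  from this[of 0] this[of 1] this[of "-1"]
  have "cdist n (j * k) 0 \<le> \<bar>j * k\<bar>" "cdist n (j * k) 0 \<le> \<bar>j * k + n\<bar>"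
    "cdist n (j * k) 0 \<le> \<bar>j * k - n\<bar>"
    by simp_all
  moreover have "j \<in> {-3, -2, -1, 0, 1, 2, 3}" using assms by auto
  ultimately show ?thesis using size by (elim insertE disjE) auto
qed

lemma row_simplex_in_VR: "row_simplex n k a b \<in> VR (torus n) (tdist n) k"
proof -
  have "tdist n (proj n (a + i * k, b)) (proj n (a + i' * k, b)) \<le> k"
    if "i \<in> {-1..2}" "i' \<in> {-1..2}" for i i'
  proof -
    have "(i - i') * k + (a + i' * k) = a + i * k" by (simp add: algebra_simps)
    from cdist_add_right[of n "(i - i') * k" "a + i' * k" 0, unfolded this]
    have "cdist n (a + i * k) (a + i' * k) = cdist n ((i - i') * k) 0" by simp
    moreover have "cdist n ((i - i') * k) 0 \<le> k" using that by (intro cdist_multiple_le) auto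
    ultimately show ?thesis by (simp add: tdist_proj cdist_self)
  qed
  then show ?thesis
    unfolding VR_def row_simplex_def using proj_in_torus[OF n_pos] by auto
qed

lemma progression_ends_far:
  assumes "tdist n (proj n (z - k, y)) (proj n (z + 3 * k, y)) \<le> k"
  shows "n = 3 * k"
proof (rule ccontr)
  assume "n \<noteq> 3 * k"
  then have n: "n = 3 * k - 1" and k: "3 \<le> k" using size by auto
  have "z - k - (z + 3 * k) - (2 * k - 2) = (-2) * n" using n by simp
  then have "(z - k - (z + 3 * k)) mod n = (2 * k - 2) mod n" unfolding mod_eq_dvd_iff by simp
  also have "\<dots> = 2 * k - 2" using n k by (intro mod_pos_pos_trivial) auto
  finally have "cdist n (z - k) (z + 3 * k) = min (2 * k - 2) (n - (2 * k - 2))"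
    unfolding cdist_eq_min_mod[OF n_pos] by simp
  then have "cdist n (z - k) (z + 3 * k) = k + 1" using n k by simp
  then show False using assms by (simp add: tdist_proj cdist_self)
qed

lemma row_simplex_maximal: "row_simplex n k a b \<in> maximal_simplices (VR (torus n) (tdist n) k)"
proof (rule maximal_simplicesI[OF row_simplex_in_VR])
  fix T assume T: "T \<in> VR (torus n) (tdist n) k" "row_simplex n k a b \<subseteq> T"
  then have row: "proj n (a - k, b) \<in> T" "proj n (a, b) \<in> T" "proj n (a + k, b) \<in> T"
    "proj n (a + 2 * k, b) \<in> T"
    unfolding row_simplex_eq by auto
  show "T \<subseteq> row_simplex n k a b"
  proof
    fix t assume t: "t \<in> T"
    then consider "t \<in> row_simplex n k a b" | "t = proj n (a + 3 * k, b)"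
      using close_to_row_triple[OF T(1) t row(2-4)] by blast
    then show "t \<in> row_simplex n k a b"
    proof cases
      case 2
      then have "n = 3 * k" using progression_ends_far VR_dist_le[OF T(1) row(1) t] by simp
      then have "t = proj n (a, b)" using 2 by (simp add: proj_row_eqI)
      then show ?thesis unfolding row_simplex_eq by simp
    qed
  qed
qed

lemma simplex_through_row_triple:
  assumes T: "T \<in> VR (torus n) (tdist n) k"
    and z: "proj n (z, y) \<in> T" "proj n (z + k, y) \<in> T" "proj n (z + 2 * k, y) \<in> T"
  shows "T \<subseteq> row_simplex n k z y \<or> T \<subseteq> row_simplex n k (z + k) y"
proof (cases "proj n (z + 3 * k, y) \<in> T")
  case False
  then show ?thesis using close_to_row_triple[OF T _ z] by blast
next
  case True
  have shifted: "row_simplex n k (z + k) y =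
      {proj n (z, y), proj n (z + k, y), proj n (z + 2 * k, y), proj n (z + 3 * k, y)}"
  proof -
    have "z + k - k = z" "z + k + k = z + 2 * k" "z + k + 2 * k = z + 3 * k" by simp_all
    then show ?thesis by (simp only: row_simplex_eq)
  qed
  have "t \<in> row_simplex n k (z + k) y" if t: "t \<in> T" for t
  proof (cases "t = proj n (z - k, y)")
    case True
    then have "n = 3 * k" using progression_ends_far VR_dist_le[OF T t \<open>proj n (z + 3 * k, y) \<in> T\<close>]
      by simp
    then have "t = proj n (z + 2 * k, y)" using True by (simp add: proj_row_eqI)
    then show ?thesis unfolding shifted by simp
  next
    case False
    from close_to_row_triple[OF T t z] have "t \<in> {proj n (z - k, y), proj n (z, y),
        proj n (z + k, y), proj n (z + 2 * k, y), proj n (z + 3 * k, y)}"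
      by (simp only: row_simplex_eq) blast
    with False show ?thesis unfolding shifted by blast
  qed
  then show ?thesis by blast
qed

lemma maximal_simplex_with_row_triple:
  assumes S: "S \<in> maximal_simplices (VR (torus n) (tdist n) k)"
    and z: "proj n (z, y) \<in> S" "proj n (z + k, y) \<in> S" "proj n (z + 2 * k, y) \<in> S"
  shows "S \<in> line_simplices n k"
proof -
  obtain a where "S \<subseteq> row_simplex n k a y"
    using simplex_through_row_triple[OF maximal_simplicesD(1)[OF S] z] by blast
  then have "S = row_simplex n k a y" using maximal_simplicesD(2)[OF S row_simplex_in_VR] by blast
  then show ?thesis unfolding line_simplices_def by blast
qed

lemma wrapping_row_triple:
  assumes "\<bar>a\<bar> \<le> k" "\<bar>b\<bar> \<le> k" "k < \<bar>a - b\<bar>" "cdist n a b \<le> k"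
  shows "\<exists>z. {proj n (x + z, y), proj n (x + z + k, y), proj n (x + z + 2 * k, y)}
               \<subseteq> {proj n (x, y), proj n (x + a, y), proj n (x + b, y)}"
proof -
  have ordered: "\<exists>z. {proj n (x + z, y), proj n (x + z + k, y), proj n (x + z + 2 * k, y)}
               \<subseteq> {proj n (x, y), proj n (x + a, y), proj n (x + b, y)}"
    if ab: "\<bar>a\<bar> \<le> k" "\<bar>b\<bar> \<le> k" "k < a - b" "cdist n a b \<le> k" for a b
  proof -
    have "cdist n a b = min (a - b) (n - (a - b))"
      using ab n_ge k_ge_2 by (simp add: cdist_eq_min_abs[OF n_pos])
    then have "n - (a - b) \<le> k" using ab(3,4) by linarith
    then have "(a = k \<and> b = - k) \<or> (n = 3 * k - 1 \<and> a = k \<and> b = 1 - k)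
        \<or> (n = 3 * k - 1 \<and> a = k - 1 \<and> b = - k)"
      using ab size by arith
    then consider "a = k" "b = - k" | "n = 3 * k - 1" "a = k" "b = 1 - k"
      | "n = 3 * k - 1" "a = k - 1" "b = - k"
      by blast
    then show ?thesis
    proof cases
      case 1
      then show ?thesis by (intro exI[of _ "- k"]) (simp add: algebra_simps)
    next
      case 2
      then have "proj n (x + 2 * k, y) = proj n (x + b, y)" by (intro proj_row_eqI) simp
      then show ?thesis using 2 by (intro exI[of _ 0]) simp
    next
      case 3
      then have "proj n (x + (k - 1) + k, y) = proj n (x + b, y)"
        "proj n (x + (k - 1) + 2 * k, y) = proj n (x, y)"
        by (simp_all add: proj_row_eqI)
      then show ?thesis using 3 by (intro exI[of _ "k - 1"]) simp
    qed
  qed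
  show ?thesis
  proof (cases "b < a")
    case True
    then show ?thesis using ordered assms by auto
  next
    case False
    then have "k < b - a" using assms(3) by auto
    then show ?thesis
      using ordered[of b a] assms cdist_commute[of n a b] by (simp add: insert_commute)
  qed
qed

lemma maximal_simplex_wrapping_row_pair:
  assumes S: "S \<in> maximal_simplices (VR (torus n) (tdist n) k)"
    and pts: "proj n (x, y) \<in> S" "proj n (x + a, y) \<in> S" "proj n (x + b, y) \<in> S"
    and ab: "\<bar>a\<bar> \<le> k" "\<bar>b\<bar> \<le> k" "k < \<bar>a - b\<bar>"
  shows "S \<in> line_simplices n k"
proof -
  have "cdist n a b = tdist n (proj n (x + a, y)) (proj n (x + b, y))"
    by (simp add: tdist_proj cdist_self cdist_def)
  also have "\<dots> \<le> k" using VR_dist_le[OF maximal_simplicesD(1)[OF S] pts(2,3)] .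
  finally obtain z where "{proj n (x + z, y), proj n (x + z + k, y), proj n (x + z + 2 * k, y)}
      \<subseteq> {proj n (x, y), proj n (x + a, y), proj n (x + b, y)}"
    using wrapping_row_triple[OF ab] by blast
  with pts show ?thesis by (intro maximal_simplex_with_row_triple[OF S, of "x + z" y]) auto
qed

lemma far_pair_on_axis:
  fixes a1 a2 b1 b2 :: int
  assumes a: "\<bar>a1\<bar> + \<bar>a2\<bar> \<le> k" and b: "\<bar>b1\<bar> + \<bar>b2\<bar> \<le> k"
    and close: "cdist n a1 b1 + cdist n a2 b2 \<le> k" and far: "k < \<bar>a1 - b1\<bar> + \<bar>a2 - b2\<bar>"
  shows "(a2 = 0 \<and> b2 = 0) \<or> (a1 = 0 \<and> b1 = 0)"
proof -
  define D1 D2 where "D1 = \<bar>a1 - b1\<bar>" and "D2 = \<bar>a2 - b2\<bar>"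
  have t: "D1 \<le> \<bar>a1\<bar> + \<bar>b1\<bar>" "D2 \<le> \<bar>a2\<bar> + \<bar>b2\<bar>" unfolding D1_def D2_def by linarith+
  have "cdist n a1 b1 = min D1 (n - D1)" "cdist n a2 b2 = min D2 (n - D2)"
    unfolding D1_def D2_def using t a b k_ge_2 n_ge by (simp_all add: cdist_eq_min_abs[OF n_pos])
  then have "D1 + min D2 (n - D2) \<le> k \<or> n - D1 + min D2 (n - D2) \<le> k"
    using min_add_le_disj[of D1 "n - D1" "min D2 (n - D2)" k] close by linarith
  then have "D1 + D2 \<le> k \<or> D1 + (n - D2) \<le> k \<or> n - D1 + D2 \<le> k \<or> n - D1 + (n - D2) \<le> k"
    by (metis add.commute min_add_le_disj)
  \<comment> \<open>one coordinate must wrap around, which leaves no budget for the other one\<close>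
  then consider "n - D1 + D2 \<le> k" | "D1 + (n - D2) \<le> k"
    using far t a b n_ge unfolding D1_def[symmetric] D2_def[symmetric] by linarith
  then show ?thesis
  proof cases
    case 1
    then have "\<bar>a2\<bar> + \<bar>b2\<bar> + D2 \<le> 1" using a b t n_ge by linarith
    then show ?thesis unfolding D2_def by linarith
  next
    case 2
    then have "\<bar>a1\<bar> + \<bar>b1\<bar> + D1 \<le> 1" using a b t n_ge by linarith
    then show ?thesis unfolding D1_def by linarith
  qed
qed

lemma maximal_simplex_far_lifts:
  assumes S: "S \<in> maximal_simplices (VR (torus n) (tdist n) k)"
    and pts: "proj n P \<in> S" "proj n Q \<in> S" "proj n R \<in> S"
    and lifts: "zdist Q P \<le> k" "zdist R P \<le> k" "k < zdist Q R"
  shows "S \<in> line_simplices n k"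
proof -
  obtain x y where P: "P = (x, y)" by (cases P)
  define a1 a2 b1 b2
    where "a1 = fst Q - x" and "a2 = snd Q - y" and "b1 = fst R - x" and "b2 = snd R - y"
  have Q: "Q = (x + a1, y + a2)" and R: "R = (x + b1, y + b2)"
    unfolding a1_def a2_def b1_def b2_def by simp_all
  have ab: "\<bar>a1\<bar> + \<bar>a2\<bar> \<le> k" "\<bar>b1\<bar> + \<bar>b2\<bar> \<le> k" "k < \<bar>a1 - b1\<bar> + \<bar>a2 - b2\<bar>"
    using lifts unfolding P a1_def a2_def b1_def b2_def zdist_def by simp_all
  have "cdist n a1 b1 + cdist n a2 b2 = tdist n (proj n Q) (proj n R)"
    unfolding tdist_proj Q R by (simp add: cdist_def)
  also have "\<dots> \<le> k" using VR_dist_le[OF maximal_simplicesD(1)[OF S] pts(2,3)] .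
  finally consider "a2 = 0" "b2 = 0" | "a1 = 0" "b1 = 0"
    using far_pair_on_axis[OF ab(1,2)] ab(3) by blast
  then show ?thesis
  proof cases
    case 1
    with pts ab show ?thesis unfolding P Q R
      by (intro maximal_simplex_wrapping_row_pair[OF S, of x y a1 b1]) simp_all
  next
    case 2
    have swapped: "proj n (y + c, x) \<in> prod.swap ` S" if "proj n (x, y + c) \<in> S" for c
      using that proj_swap[of n "(x, y + c)"] by force
    have "prod.swap ` S \<in> line_simplices n k"
      using swapped[of 0] swapped[of a2] swapped[of b2] pts 2 ab unfolding P Q R
      by (intro maximal_simplex_wrapping_row_pair[OF maximal_simplices_swap[OF S], of y x a2 b2])
        simp_all
    from swap_image_line_simplices[OF this] show ?thesis by (simp add: image_image)
  qed
qed

lemma maximal_simplex_cases: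
  assumes S: "S \<in> maximal_simplices (VR (torus n) (tdist n) k)"
  shows "S \<in> Mset n k \<union> line_simplices n k"
proof -
  have SV: "S \<in> VR (torus n) (tdist n) k" by (rule maximal_simplicesD(1)[OF S])
  then obtain p0 where p0: "p0 \<in> S" unfolding VR_def by auto
  have on_torus: "proj n q = q" if "q \<in> S" for q
    using VR_subset[OF SV] that proj_eq_self by blast
  have "\<exists>Q. proj n Q = q \<and> zdist Q p0 \<le> k" if "q \<in> S" for q
    using exists_close_lift[OF n_pos, of q p0] VR_dist_le[OF SV that p0]
      on_torus[OF that] on_torus[OF p0]
    by metis
  then obtain f where f: "\<And>q. q \<in> S \<Longrightarrow> proj n (f q) = q \<and> zdist (f q) p0 \<le> k"
    by metis
  show ?thesis
  proof (cases "f ` S \<in> VR UNIV zdist k")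
    case True
    have "S \<subseteq> proj n ` f ` S" using f by force
    then show ?thesis using maximal_simplex_in_Mset[OF n_pos _ S True] k_ge_2 by simp
  next
    case False
    then obtain q r where qr: "q \<in> S" "r \<in> S" "k < zdist (f q) (f r)"
      using SV unfolding VR_def by fastforce
    have "S \<in> line_simplices n k"
      using maximal_simplex_far_lifts[OF S _ _ _ _ _ qr(3)] on_torus[OF p0] p0 f qr(1,2) by metis
    then show ?thesis by simp
  qed
qed

theorem maximal_simplices_torus:
  "maximal_simplices (VR (torus n) (tdist n) k) = Mset n k \<union> line_simplices n k"
proof
  show "maximal_simplices (VR (torus n) (tdist n) k) \<subseteq> Mset n k \<union> line_simplices n k"
    using maximal_simplex_cases by blast
  have "1 \<le> k" using k_ge_2 by simp
  then have "Mset n k \<subseteq> maximal_simplices (VR (torus n) (tdist n) k)"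
    unfolding Mset_def maximal_simplices_VR_int_plane[OF \<open>1 \<le> k\<close>]
    using proj_diamond_maximal[OF _ n_large] by auto
  moreover have "line_simplices n k \<subseteq> maximal_simplices (VR (torus n) (tdist n) k)"
    unfolding line_simplices_def using row_simplex_maximal maximal_simplices_swap by blast
  ultimately show "Mset n k \<union> line_simplices n k \<subseteq> maximal_simplices (VR (torus n) (tdist n) k)"
    by blast
qed

end

lemma row_simplex_mod: "row_simplex n k (a mod n) (b mod n) = row_simplex n k a b"
  unfolding row_simplex_def proj_def by (simp add: mod_add_left_eq)

lemma line_simplices_residues:
  assumes "0 < n"
  shows "line_simplices n k =
    {row_simplex n k a b | a b. 0 \<le> a \<and> a \<le> n - 1 \<and> 0 \<le> b \<and> b \<le> n - 1} \<union>
    {prod.swap ` row_simplex n k b a | a b. 0 \<le> a \<and> a \<le> n - 1 \<and> 0 \<le> b \<and> b \<le> n - 1}"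
proof -
  have range: "0 \<le> c mod n" "c mod n \<le> n - 1" for c using assms by simp_all
  show ?thesis
    unfolding line_simplices_def using row_simplex_mod range by blast
qed

lemma N3_eq_line_simplices:
  assumes "0 < k"
  shows "N3 k = line_simplices (3 * k) k"
proof -
  let ?n = "3 * k"
  have row: "row_simplex ?n k a b =
      {proj ?n (a, b), proj ?n (a + k, b), proj ?n (a + 2 * k, b)}" for a b
  proof -
    have "proj ?n (a - k, b) = proj ?n (a + 2 * k, b)" by (rule proj_row_eqI) simp
    then show ?thesis unfolding row_simplex_eq by auto
  qed
  have col: "prod.swap ` {proj ?n (b, a), proj ?n (b + k, a), proj ?n (b + 2 * k, a)} =
      {proj ?n (a, b), proj ?n (a, b + k), proj ?n (a, b + 2 * k)}" for a b
    by (simp add: proj_def)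
  have "0 < ?n" using assms by simp
  show ?thesis
    unfolding N3_def Let_def line_simplices_residues[OF \<open>0 < ?n\<close>] row col ..
qed

lemma N3m1_eq_line_simplices:
  assumes "0 < k"
  shows "N3m1 k = line_simplices (3 * k - 1) k"
proof -
  let ?n = "3 * k - 1"
  have row: "row_simplex ?n k a b =
      {proj ?n (a, b), proj ?n (a + k, b), proj ?n (a + 2 * k - 1, b), proj ?n (a + 2 * k, b)}" for a b
  proof -
    have "proj ?n (a - k, b) = proj ?n (a + 2 * k - 1, b)"
      by (intro proj_row_eqI dvdI[of _ _ "-1"]) simp
    then show ?thesis unfolding row_simplex_eq by auto
  qed
  have col: "prod.swap `
      {proj ?n (b, a), proj ?n (b + k, a), proj ?n (b + 2 * k - 1, a), proj ?n (b + 2 * k, a)} =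
      {proj ?n (a, b), proj ?n (a, b + k), proj ?n (a, b + 2 * k - 1), proj ?n (a, b + 2 * k)}" for a b
    by (simp add: proj_def)
  have "0 < ?n" using assms by simp
  show ?thesis
    unfolding N3m1_def Let_def line_simplices_residues[OF \<open>0 < ?n\<close>] row col ..
qed

theorem lemma5p5:
  shows "(\<forall>k::int. k \<ge> 2 \<longrightarrow>
            maximal_simplices (VR (torus (3 * k)) (tdist (3 * k)) k) = Mset (3 * k) k \<union> N3 k)
       \<and> (\<forall>k::int. k \<ge> 3 \<longrightarrow>
            maximal_simplices (VR (torus (3 * k - 1)) (tdist (3 * k - 1)) k) = Mset (3 * k - 1) k \<union> N3m1 k)"
proof (intro conjI allI impI)
  fix k :: int
  assume "k \<ge> 2"
  then interpret torus_near_3k "3 * k" k by unfold_locales simp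
  show "maximal_simplices (VR (torus (3 * k)) (tdist (3 * k)) k) = Mset (3 * k) k \<union> N3 k"
    using N3_eq_line_simplices maximal_simplices_torus \<open>k \<ge> 2\<close> by simp
next
  fix k :: int
  assume "k \<ge> 3"
  then interpret torus_near_3k "3 * k - 1" k by unfold_locales simp
  show "maximal_simplices (VR (torus (3 * k - 1)) (tdist (3 * k - 1)) k) =
      Mset (3 * k - 1) k \<union> N3m1 k"
    using N3m1_eq_line_simplices maximal_simplices_torus \<open>k \<ge> 3\<close> by simp
qed

end
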